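(* Let $F$ be a field with $\mathrm{char}\,F\ne2$ and let $A$ be an involutive $F$-algebra with involution $a\mapsto\bar a$ and trace $\mathrm{tr}(a)=a+\bar a\in F$. Then: (1) $\overline{ab}-ba=\mathrm{tr}(a)\mathrm{tr}(b)-\mathrm{tr}(a)b-\mathrm{tr}(b)a$ for all $a,b\in A$; (2) $A$ is von-Neumann finite if and only if for all $a,b\in A$ with $ab\in F\setminus\{0\}$ (i.e. $ab$ is a nonzero scalar multiple of $1$), either $a,b\in\mathrm{Im}\,A$ or $1,a,b$ are linearly dependent; (3) $A$ is reversible if and only if for all $a,b\in A$ with $ab=0$, either $a,b\in\mathrm{Im}\,A$ or $1,a,b$ are linearly dependent.
   Context: Algebras are unital with bilinear, not necessarily associative, multiplication; $F$ is identified with $F1$. $A$ is involutive if there is an anti-automorphism $\sigma$ (written $\sigma(a)=\bar a$) with $\sigma^2=\mathrm{id}$ and $a+\bar a\in F1$, $a\bar a\in F1$ for all $a$. $\mathrm{Im}\,A=\{u\in A\setminus F1: u^2\in F1\}\cup\{0\}$. von-Neumann finite: $ab=1\Rightarrow ba=1$; reversible: $ab=0\Rightarrow ba=0$. *)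

theory Defs
  imports Main "HOL.Vector_Spaces"
begin

definition unital_algebra ::
  "('f::field \<Rightarrow> 'v::ab_group_add \<Rightarrow> 'v) \<Rightarrow> ('v \<Rightarrow> 'v \<Rightarrow> 'v) \<Rightarrow> 'v \<Rightarrow> bool" where
  "unital_algebra scale mult one \<longleftrightarrow>
     vector_space scale \<and>
     (\<forall>x y z. mult (x + y) z = mult x z + mult y z) \<and>
     (\<forall>x y z. mult x (y + z) = mult x y + mult x z) \<and>
     (\<forall>c x y. mult (scale c x) y = scale c (mult x y)) \<and>
     (\<forall>c x y. mult x (scale c y) = scale c (mult x y)) \<and>
     (\<forall>x. mult one x = x \<and> mult x one = x)"

definition is_scalar :: "('f::field \<Rightarrow> 'v::ab_group_add \<Rightarrow> 'v) \<Rightarrow> 'v \<Rightarrow> 'v \<Rightarrow> bool" where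
  "is_scalar scale one x \<longleftrightarrow> (\<exists>t. x = scale t one)"

definition involution ::
  "('f::field \<Rightarrow> 'v::ab_group_add \<Rightarrow> 'v) \<Rightarrow> ('v \<Rightarrow> 'v \<Rightarrow> 'v) \<Rightarrow> 'v \<Rightarrow> ('v \<Rightarrow> 'v) \<Rightarrow> bool" where
  "involution scale mult one \<sigma> \<longleftrightarrow>
     (\<forall>x y. \<sigma> (x + y) = \<sigma> x + \<sigma> y) \<and>
     (\<forall>c x. \<sigma> (scale c x) = scale c (\<sigma> x)) \<and>
     (\<forall>x y. \<sigma> (mult x y) = mult (\<sigma> y) (\<sigma> x)) \<and>
     \<sigma> one = one \<and>
     (\<forall>x. \<sigma> (\<sigma> x) = x) \<and>
     (\<forall>x. is_scalar scale one (x + \<sigma> x)) \<and>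
     (\<forall>x. is_scalar scale one (mult x (\<sigma> x)))"

definition trace ::
  "('f::field \<Rightarrow> 'v::ab_group_add \<Rightarrow> 'v) \<Rightarrow> 'v \<Rightarrow> ('v \<Rightarrow> 'v) \<Rightarrow> 'v \<Rightarrow> 'f" where
  "trace scale one \<sigma> x = (THE t. x + \<sigma> x = scale t one)"

definition imag_part ::
  "('f::field \<Rightarrow> 'v::ab_group_add \<Rightarrow> 'v) \<Rightarrow> ('v \<Rightarrow> 'v \<Rightarrow> 'v) \<Rightarrow> 'v \<Rightarrow> 'v set" where
  "imag_part scale mult one =
     {u. \<not> is_scalar scale one u \<and> is_scalar scale one (mult u u)} \<union> {0}"

definition lin_dep3 ::
  "('f::field \<Rightarrow> 'v::ab_group_add \<Rightarrow> 'v) \<Rightarrow> 'v \<Rightarrow> 'v \<Rightarrow> 'v \<Rightarrow> bool" where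
  "lin_dep3 scale x y z \<longleftrightarrow>
     (\<exists>c0 c1 c2. (c0, c1, c2) \<noteq> (0, 0, 0) \<and> scale c0 x + scale c1 y + scale c2 z = 0)"

definition vN_finite :: "('v \<Rightarrow> 'v \<Rightarrow> 'v) \<Rightarrow> 'v \<Rightarrow> bool" where
  "vN_finite mult one \<longleftrightarrow> (\<forall>a b. mult a b = one \<longrightarrow> mult b a = one)"

definition reversible :: "('v::zero \<Rightarrow> 'v \<Rightarrow> 'v) \<Rightarrow> bool" where
  "reversible mult \<longleftrightarrow> (\<forall>a b. mult a b = 0 \<longrightarrow> mult b a = 0)"

end

theory Submission
  imports Defs
begin

text \<open>Writing \<open>\<sigma> a = tr a - a\<close>, one gets
  \<open>\<sigma>(ab) - ba = tr a tr b - tr a b - tr b a\<close>, so \<open>\<sigma>(ab) = ba\<close> forces either a linear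
  dependence of \<open>1, a, b\<close> or \<open>tr a = tr b = 0\<close>, and trace-zero elements are scalars or lie in
  \<open>Im A\<close> (as \<open>a\<^sup>2 = - a \<sigma>(a)\<close>). Conversely elements of \<open>Im A\<close> have trace zero, so for them
  \<open>\<sigma>(ab) = ba\<close>, while dependent \<open>a, b\<close> commute. When \<open>ab\<close> is a scalar, \<open>\<sigma>(ab) = ab\<close>; hence
  \<open>ba = ab\<close> holds exactly when \<open>a, b \<in> Im A\<close> or \<open>1, a, b\<close> are dependent. Applied to
  \<open>ab = 1\<close> (after rescaling) and to \<open>ab = 0\<close> this gives (2) and (3).\<close>

locale involutive_algebra =
  fixes scale :: "'f::field \<Rightarrow> 'v::ab_group_add \<Rightarrow> 'v"
    and mult :: "'v \<Rightarrow> 'v \<Rightarrow> 'v" and one :: 'v and \<sigma> :: "'v \<Rightarrow> 'v"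
  assumes algebra: "unital_algebra scale mult one"
    and involution: "involution scale mult one \<sigma>"
begin

sublocale vector_space scale
  using algebra unfolding unital_algebra_def by simp

abbreviation tr :: "'v \<Rightarrow> 'f" where
  "tr x \<equiv> trace scale one \<sigma> x"

abbreviation Im :: "'v set" where
  "Im \<equiv> imag_part scale mult one"

lemma mult_add_left: "mult (x + y) z = mult x z + mult y z"
  and mult_add_right: "mult x (y + z) = mult x y + mult x z"
  and mult_scale_left: "mult (scale c x) y = scale c (mult x y)"
  and mult_scale_right: "mult x (scale c y) = scale c (mult x y)"
  and mult_one_left: "mult one x = x"
  and mult_one_right: "mult x one = x"
  using algebra unfolding unital_algebra_def by blast+

lemma inv_scale: "\<sigma> (scale c x) = scale c (\<sigma> x)"
  and inv_mult: "\<sigma> (mult x y) = mult (\<sigma> y) (\<sigma> x)"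
  and inv_one: "\<sigma> one = one"
  and add_inv_scalar: "\<exists>t. x + \<sigma> x = scale t one"
  and mult_inv_scalar: "\<exists>t. mult x (\<sigma> x) = scale t one"
  using involution unfolding involution_def is_scalar_def by blast+

lemma mult_minus_left: "mult (- x) y = - mult x y"
  using mult_scale_left[of "-1" x y] by (simp add: scale_minus_left)

lemma mult_minus_right: "mult x (- y) = - mult x y"
  using mult_scale_right[of x "-1" y] by (simp add: scale_minus_left)

lemma mult_diff_left: "mult (x - y) z = mult x z - mult y z"
  by (simp only: diff_conv_add_uminus mult_add_left mult_minus_left)

lemma mult_diff_right: "mult x (y - z) = mult x y - mult x z"
  by (simp only: diff_conv_add_uminus mult_add_right mult_minus_right)

lemma mult_zero_left: "mult 0 y = 0"
  using mult_scale_left[of 0 0 y] by simp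

lemma inv_zero: "\<sigma> 0 = 0"
  using inv_scale[of 0 0] by simp

lemma inv_scalar: "\<sigma> (scale t one) = scale t one"
  by (simp add: inv_scale inv_one)

lemma trivial_if_one_eq_0: "one = 0 \<Longrightarrow> (x::'v) = y"
  using mult_one_left[of x] mult_one_left[of y] by (simp add: mult_zero_left)

lemma lin_dep3_if_one_eq_0: "one = 0 \<Longrightarrow> lin_dep3 scale one a b"
  unfolding lin_dep3_def by (intro exI[of _ 1] exI[of _ 0]) simp

lemma scale_one_inj: "one \<noteq> 0 \<Longrightarrow> scale s one = scale t one \<Longrightarrow> s = t"
  by (metis eq_iff_diff_eq_0 scale_eq_0_iff scale_left_diff_distrib)

lemma add_inv_eq_trace: "one \<noteq> 0 \<Longrightarrow> x + \<sigma> x = scale (tr x) one"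
proof -
  assume "one \<noteq> 0"
  obtain t where t: "x + \<sigma> x = scale t one"
    using add_inv_scalar by blast
  have "tr x = t"
    unfolding trace_def by (rule the_equality) (use t scale_one_inj[OF \<open>one \<noteq> 0\<close>] in auto)
  with t show ?thesis by simp
qed

lemma inv_eq_trace_minus: "one \<noteq> 0 \<Longrightarrow> \<sigma> x = scale (tr x) one - x"
  using add_inv_eq_trace[of x] by (simp add: algebra_simps)

lemma inv_mult_minus_swap:
  "\<sigma> (mult a b) - mult b a = scale (tr a * tr b) one - scale (tr a) b - scale (tr b) a"
proof (cases "one = 0")
  case True
  then show ?thesis by (rule trivial_if_one_eq_0)
next
  case False
  have "\<sigma> (mult a b) = mult (scale (tr b) one - b) (scale (tr a) one - a)"
    using inv_mult inv_eq_trace_minus[OF False] by simp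
  also have "\<dots> = scale (tr b * tr a) one - scale (tr b) a - scale (tr a) b + mult b a"
    by (simp add: mult_diff_left mult_diff_right mult_scale_left mult_scale_right
        mult_one_left mult_one_right algebra_simps)
  finally show ?thesis by (simp add: mult.commute)
qed

lemma trace_imag_part:
  assumes "one \<noteq> 0" and "u \<in> Im"
  shows "tr u = 0"
proof (cases "u = 0")
  case True
  then have "scale (tr u) one = scale 0 one"
    using add_inv_eq_trace[OF \<open>one \<noteq> 0\<close>, of 0] by (simp add: inv_zero)
  then show ?thesis using scale_one_inj[OF \<open>one \<noteq> 0\<close>] by blast
next
  case False
  then have not_scalar: "\<nexists>t. u = scale t one" and "\<exists>s. mult u u = scale s one"
    using \<open>u \<in> Im\<close> unfolding imag_part_def is_scalar_def by auto
  then obtain s where s: "mult u u = scale s one" by blast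
  obtain n where n: "mult u (\<sigma> u) = scale n one"
    using mult_inv_scalar by blast
  have "mult u (\<sigma> u) = scale (tr u) u - mult u u"
    using inv_eq_trace_minus[OF \<open>one \<noteq> 0\<close>, of u]
    by (simp add: mult_diff_right mult_scale_right mult_one_right)
  with n s have u_scaled: "scale (tr u) u = scale (n + s) one"
    by (simp add: algebra_simps)
  show ?thesis
  proof (rule ccontr)
    assume "tr u \<noteq> 0"
    with u_scaled have "u = scale (inverse (tr u) * (n + s)) one"
      by (metis scale_scale left_inverse scale_one)
    with not_scalar show False by blast
  qed
qed

lemma imag_part_or_scalar_if_trace_0:
  assumes "one \<noteq> 0" and "tr x = 0"
  shows "x \<in> Im \<or> (\<exists>t. x = scale t one)"
proof -
  obtain n where "mult x (\<sigma> x) = scale n one"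
    using mult_inv_scalar by blast
  moreover have "\<sigma> x = - x"
    using inv_eq_trace_minus[OF \<open>one \<noteq> 0\<close>, of x] \<open>tr x = 0\<close> by simp
  ultimately have "- mult x x = scale n one"
    by (simp add: mult_minus_right)
  then have "mult x x = scale (- n) one"
    by (metis minus_minus scale_minus_left)
  then show ?thesis unfolding imag_part_def is_scalar_def by blast
qed

lemma lin_dep3_if_scalar:
  assumes "a = scale t one"
  shows "lin_dep3 scale one a b" and "lin_dep3 scale one b a"
  unfolding lin_dep3_def
  by (rule exI[of _ t], rule exI[of _ "-1"], rule exI[of _ 0], simp add: assms scale_minus_left)
     (rule exI[of _ t], rule exI[of _ 0], rule exI[of _ "-1"], simp add: assms scale_minus_left)

lemma mult_commute_if_lin_dep3:
  assumes "lin_dep3 scale one a b"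
  shows "mult a b = mult b a"
proof (cases "one = 0")
  case True
  then show ?thesis by (rule trivial_if_one_eq_0)
next
  case False
  obtain c0 c1 c2 where nz: "(c0, c1, c2) \<noteq> (0, 0, 0)"
    and dep: "scale c0 one + scale c1 a + scale c2 b = 0"
    using assms unfolding lin_dep3_def by blast
  show ?thesis
  proof (cases "c2 = 0")
    case False
    from dep have "scale c2 b = - scale c0 one - scale c1 a"
      by (simp add: algebra_simps flip: add_eq_0_iff2)
    with False have "b = scale (inverse c2) (- scale c0 one - scale c1 a)"
      by (metis scale_scale left_inverse scale_one)
    then show ?thesis
      by (simp add: mult_diff_left mult_diff_right mult_scale_left mult_scale_right
          mult_one_left mult_one_right mult_minus_left mult_minus_right)
  next
    case True
    with nz dep False have "c1 \<noteq> 0"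
      by auto
    from True dep have "scale c1 a = - scale c0 one"
      by (metis add.commute add_0_right neg_eq_iff_add_eq_0 scale_zero_left)
    then have "scale (inverse c1) (scale c1 a) = scale (inverse c1) (- scale c0 one)"
      by simp
    with \<open>c1 \<noteq> 0\<close> have "a = scale (- inverse c1 * c0) one"
      by (simp add: scale_minus_right)
    then show ?thesis
      by (simp only: mult_scale_left mult_scale_right mult_one_left mult_one_right)
  qed
qed

lemma imag_or_lin_dep3_if_inv_mult_eq_swap:
  assumes "\<sigma> (mult a b) = mult b a"
  shows "(a \<in> Im \<and> b \<in> Im) \<or> lin_dep3 scale one a b"
proof (cases "one = 0")
  case True
  then show ?thesis using lin_dep3_if_one_eq_0 by blast
next
  case False
  have relation: "scale (tr a * tr b) one + scale (- tr b) a + scale (- tr a) b = 0"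
    using inv_mult_minus_swap[of a b] assms by (simp add: scale_minus_left algebra_simps)
  show ?thesis
  proof (cases "tr a = 0 \<and> tr b = 0")
    case True
    then show ?thesis
      using imag_part_or_scalar_if_trace_0[OF False] lin_dep3_if_scalar by blast
  next
    case False
    then have "(tr a * tr b, - tr b, - tr a) \<noteq> (0, 0, 0)" by auto
    with relation show ?thesis unfolding lin_dep3_def by blast
  qed
qed

lemma inv_mult_eq_swap_if_imag:
  assumes "a \<in> Im" and "b \<in> Im"
  shows "\<sigma> (mult a b) = mult b a"
proof (cases "one = 0")
  case True
  then show ?thesis by (rule trivial_if_one_eq_0)
next
  case False
  then show ?thesis
    using inv_mult_minus_swap[of a b] trace_imag_part[OF False] assms by simp
qed

lemma swap_eq_iff_imag_or_lin_dep3_if_scalar: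
  assumes "mult a b = scale t one"
  shows "mult b a = mult a b \<longleftrightarrow> (a \<in> Im \<and> b \<in> Im) \<or> lin_dep3 scale one a b"
proof -
  have "\<sigma> (mult a b) = mult a b"
    using assms inv_scalar by simp
  then show ?thesis
    using imag_or_lin_dep3_if_inv_mult_eq_swap[of a b] inv_mult_eq_swap_if_imag[of a b]
      mult_commute_if_lin_dep3[of a b] by metis
qed

lemma vN_finite_iff:
  "vN_finite mult one \<longleftrightarrow>
     (\<forall>a b. (\<exists>t. t \<noteq> 0 \<and> mult a b = scale t one) \<longrightarrow> (a \<in> Im \<and> b \<in> Im) \<or> lin_dep3 scale one a b)"
proof -
  have "vN_finite mult one \<longleftrightarrow>
     (\<forall>a b t. t \<noteq> 0 \<and> mult a b = scale t one \<longrightarrow> mult b a = mult a b)"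
  proof
    assume vN: "vN_finite mult one"
    show "\<forall>a b t. t \<noteq> 0 \<and> mult a b = scale t one \<longrightarrow> mult b a = mult a b"
    proof (intro allI impI, elim conjE)
      fix a b t
      assume "t \<noteq> 0" and ab: "mult a b = scale t one"
      then have "mult a (scale (inverse t) b) = one"
        by (simp add: mult_scale_right)
      with vN have "mult (scale (inverse t) b) a = one"
        unfolding vN_finite_def by blast
      with \<open>t \<noteq> 0\<close> ab show "mult b a = mult a b"
        by (metis mult_scale_left scale_scale right_inverse scale_one)
    qed
  next
    assume "\<forall>a b t. t \<noteq> 0 \<and> mult a b = scale t one \<longrightarrow> mult b a = mult a b"
    then show "vN_finite mult one"
      unfolding vN_finite_def by (metis scale_one one_neq_zero)
  qed
  then show ?thesis
    using swap_eq_iff_imag_or_lin_dep3_if_scalar by blast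
qed

lemma reversible_iff:
  "reversible mult \<longleftrightarrow>
     (\<forall>a b. mult a b = 0 \<longrightarrow> (a \<in> Im \<and> b \<in> Im) \<or> lin_dep3 scale one a b)"
  unfolding reversible_def
  using swap_eq_iff_imag_or_lin_dep3_if_scalar[where t = 0] by auto

end

theorem lemma4p6:
  fixes scale :: "'f::field \<Rightarrow> 'v::ab_group_add \<Rightarrow> 'v"
    and mult :: "'v \<Rightarrow> 'v \<Rightarrow> 'v" and one :: 'v and \<sigma> :: "'v \<Rightarrow> 'v"
  assumes char: "(2::'f) \<noteq> 0"
    and alg: "unital_algebra scale mult one"
    and inv: "involution scale mult one \<sigma>"
  shows "(\<forall>a b. \<sigma> (mult a b) - mult b a =
              scale (trace scale one \<sigma> a * trace scale one \<sigma> b) one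
              - scale (trace scale one \<sigma> a) b - scale (trace scale one \<sigma> b) a)
     \<and> (vN_finite mult one \<longleftrightarrow>
          (\<forall>a b. (\<exists>t. t \<noteq> 0 \<and> mult a b = scale t one) \<longrightarrow>
             (a \<in> imag_part scale mult one \<and> b \<in> imag_part scale mult one)
             \<or> lin_dep3 scale one a b))
     \<and> (reversible mult \<longleftrightarrow>
          (\<forall>a b. mult a b = 0 \<longrightarrow>
             (a \<in> imag_part scale mult one \<and> b \<in> imag_part scale mult one)
             \<or> lin_dep3 scale one a b))"
proof -
  interpret involutive_algebra scale mult one \<sigma>
    using alg inv by unfold_locales
  show ?thesis
    using inv_mult_minus_swap vN_finite_iff reversible_iff by blast
qed

end
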